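(* Let $p\geq1$, let $G$ be a discrete group with identity $e$, let $a\in G$, and let $\mu$ be a left Haar measure on $G$ with $\mu(\{e\})\geq1$. Let $(\gamma_n)_n$ be an unbounded sequence of non-negative integers and $w:G\to(0,\infty)$ a bounded function with $$c:=\inf_{n\in\mathbb{N}}\prod_{k=1}^{\gamma_n}w(a^k)>0.$$ Then the set $$\Gamma:=\big\{f\in L^p(G,\mu):\ |f(e)|\,c\geq1\big\}$$ is not $\sigma$-porous in $L^p(G,\mu)$. In particular, with $T_n:=T_{a,w,p}^{\gamma_n}$, the set of all non-hypercyclic vectors of the sequence $(T_n)_n$ is not $\sigma$-porous in $L^p(G,\mu)$.
   Context: For $a\in G$ and a bounded weight $w:G\to(0,\infty)$, the weighted translation operator $T_{a,w,p}:L^p(G,\mu)\to L^p(G,\mu)$ is $(T_{a,w,p}f)(x)=w(x)\,f(a^{-1}x)$. A sequence $(T_n)_n$ of bounded operators on a Banach space $\mathcal X$ is hypercyclic if some $x\in\mathcal X$ (a hypercyclic vector) has dense orbit $\{T_nx:n\in\mathbb N_0\}$; the non-hypercyclic vectors are the elements of $\mathcal X$ that are not hypercyclic vectors. Porosity: Let $X$ be a metric space and $0<\lambda<1$. A set $E\subseteq X$ is $\lambda$-porous at $x\in E$ if for each $\delta>0$ there is $y\in B(x;\delta)\setminus\{x\}$ with $B(y;\lambda\, d(x,y))\cap E=\varnothing$; $E$ is $\lambda$-porous if it is $\lambda$-porous at each of its points; $E$ is $\sigma$-$\lambda$-porous if it is a countable union of $\lambda$-porous subsets of $X$. A set is called $\sigma$-porous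 if it is $\sigma$-$\lambda$-porous for some $\lambda\in(0,1)$; "not $\sigma$-porous" means not $\sigma$-$\lambda$-porous for any $\lambda\in(0,1)$. *)

theory Defs
  imports "HOL-Analysis.Analysis"
begin

text \<open>Groups are written additively (class group_add, not assumed commutative):
  the identity e is 0, the product a x is a + x, the inverse a^-1 is -a.\<close>

fun gpow :: "nat \<Rightarrow> 'g::group_add \<Rightarrow> 'g" where
  "gpow 0 a = 0"
| "gpow (Suc k) a = a + gpow k a"

text \<open>Left Haar measure on G with the discrete topology: a measure on all subsets
  (the Borel sets of a discrete space), left invariant, finite on compact
  (= finite) sets, and nonzero.\<close>
definition discrete_left_Haar :: "'g::group_add measure \<Rightarrow> bool" where
  "discrete_left_Haar M \<longleftrightarrow>
     sets M = UNIV \<and>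
     (\<forall>b A. emeasure M ((\<lambda>x. b + x) ` A) = emeasure M A) \<and>
     (\<forall>A. finite A \<longrightarrow> emeasure M A < \<infinity>) \<and>
     emeasure M UNIV \<noteq> 0"

definition Lp :: "'g measure \<Rightarrow> real \<Rightarrow> ('g \<Rightarrow> complex) set" where
  "Lp M p = {f. f \<in> borel_measurable M \<and>
                (\<integral>\<^sup>+ x. ennreal (cmod (f x) powr p) \<partial>M) < \<infinity>}"

definition Lp_dist :: "'g measure \<Rightarrow> real \<Rightarrow> ('g \<Rightarrow> complex) \<Rightarrow> ('g \<Rightarrow> complex) \<Rightarrow> real" where
  "Lp_dist M p f g = enn2real (\<integral>\<^sup>+ x. ennreal (cmod (f x - g x) powr p) \<partial>M) powr (1 / p)"

definition wtrans :: "'g::group_add \<Rightarrow> ('g \<Rightarrow> real) \<Rightarrow> ('g \<Rightarrow> complex) \<Rightarrow> ('g \<Rightarrow> complex)" where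
  "wtrans a w f = (\<lambda>x. complex_of_real (w x) * f (- a + x))"

definition hypercyclic_vector :: "'x set \<Rightarrow> ('x \<Rightarrow> 'x \<Rightarrow> real) \<Rightarrow> (nat \<Rightarrow> 'x \<Rightarrow> 'x) \<Rightarrow> 'x \<Rightarrow> bool" where
  "hypercyclic_vector X d T f \<longleftrightarrow> f \<in> X \<and> (\<forall>g\<in>X. \<forall>\<epsilon>>0. \<exists>n. d (T n f) g < \<epsilon>)"

definition non_hypercyclic_vectors :: "'x set \<Rightarrow> ('x \<Rightarrow> 'x \<Rightarrow> real) \<Rightarrow> (nat \<Rightarrow> 'x \<Rightarrow> 'x) \<Rightarrow> 'x set" where
  "non_hypercyclic_vectors X d T = {f\<in>X. \<not> hypercyclic_vector X d T f}"

definition porous_at :: "'x set \<Rightarrow> ('x \<Rightarrow> 'x \<Rightarrow> real) \<Rightarrow> real \<Rightarrow> 'x set \<Rightarrow> 'x \<Rightarrow> bool" where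
  "porous_at X d lam E x \<longleftrightarrow>
     (\<forall>\<delta>>0. \<exists>y\<in>X. y \<noteq> x \<and> d x y < \<delta> \<and>
                 (\<forall>z\<in>X. d y z < lam * d x y \<longrightarrow> z \<notin> E))"

definition porous :: "'x set \<Rightarrow> ('x \<Rightarrow> 'x \<Rightarrow> real) \<Rightarrow> real \<Rightarrow> 'x set \<Rightarrow> bool" where
  "porous X d lam E \<longleftrightarrow> (\<forall>x\<in>E. porous_at X d lam E x)"

definition sigma_porous_lam :: "'x set \<Rightarrow> ('x \<Rightarrow> 'x \<Rightarrow> real) \<Rightarrow> real \<Rightarrow> 'x set \<Rightarrow> bool" where
  "sigma_porous_lam X d lam E \<longleftrightarrow>
     (\<exists>A :: nat \<Rightarrow> 'x set. (\<forall>n. A n \<subseteq> X \<and> porous X d lam (A n)) \<and> E = (\<Union>n. A n))"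

definition sigma_porous :: "'x set \<Rightarrow> ('x \<Rightarrow> 'x \<Rightarrow> real) \<Rightarrow> 'x set \<Rightarrow> bool" where
  "sigma_porous X d E \<longleftrightarrow> (\<exists>lam. 0 < lam \<and> lam < 1 \<and> sigma_porous_lam X d lam E)"

end

theory Submission
  imports Defs
begin

text \<open>Since \<open>\<mu>{e} \<ge> 1\<close>, the modulus of the value of a function at any point is bounded
  by its \<open>L\<^sup>p\<close> distance to zero. Hence \<open>\<Gamma>\<close> contains the ball of radius \<open>1/c\<close> around
  \<open>(2/c) \<delta>\<^sub>e\<close>, and a set with an interior point is not \<open>\<sigma>\<close>-porous in a complete space, by a
  Baire-type nested-ball argument; the quasi-triangle inequality of the \<open>L\<^sup>p\<close> distance with
  constant 4 is enough for it. For \<open>f \<in> \<Gamma>\<close> the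
  function \<open>T\<^sup>m f\<close> takes at \<open>a\<^sup>m\<close> the value \<open>w(a) \<cdots> w(a\<^sup>m) f(e)\<close>, so for \<open>m = \<gamma>\<^sub>n\<close> it is at
  distance at least \<open>c |f(e)| \<ge> 1\<close> from 0: the orbit of \<open>f\<close> avoids the unit ball around 0.\<close>

lemma porous_subset:
  assumes B: "porous X d lam B" and CB: "C \<subseteq> B"
  shows "porous X d lam C"
  unfolding porous_def porous_at_def
proof (intro ballI allI impI)
  fix x \<delta> assume "x \<in> C" "\<delta> > (0::real)"
  then have "porous_at X d lam B x" using B CB unfolding porous_def by blast
  with \<open>\<delta> > 0\<close> obtain y where "y \<in> X" "y \<noteq> x" "d x y < \<delta>"
    and "\<forall>z\<in>X. d y z < lam * d x y \<longrightarrow> z \<notin> B"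
    unfolding porous_at_def by blast
  then show "\<exists>y\<in>X. y \<noteq> x \<and> d x y < \<delta> \<and> (\<forall>z\<in>X. d y z < lam * d x y \<longrightarrow> z \<notin> C)"
    using CB by blast
qed

lemma sigma_porous_subset:
  fixes X :: "'x set"
  assumes EF: "E \<subseteq> F" and F: "sigma_porous X d F"
  shows "sigma_porous X d E"
proof -
  obtain lam where lam: "0 < lam" "lam < 1" and "sigma_porous_lam X d lam F"
    using F unfolding sigma_porous_def by blast
  then obtain A :: "nat \<Rightarrow> 'x set" where A: "\<forall>n. A n \<subseteq> X \<and> porous X d lam (A n)"
    and F_eq: "F = (\<Union>n. A n)"
    unfolding sigma_porous_lam_def by blast
  have "\<forall>n. A n \<inter> E \<subseteq> X \<and> porous X d lam (A n \<inter> E)"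
    using A porous_subset[OF _ Int_lower1] by blast
  moreover have "E = (\<Union>n. A n \<inter> E)" using EF F_eq by auto
  ultimately have "sigma_porous_lam X d lam E"
    unfolding sigma_porous_lam_def by (intro exI[of _ "\<lambda>n. A n \<inter> E"]) simp
  then show ?thesis using lam unfolding sigma_porous_def by blast
qed

lemma porous_hole_in_ball:
  fixes d :: "'x \<Rightarrow> 'x \<Rightarrow> real"
  assumes quasi: "\<And>x y z. x \<in> X \<Longrightarrow> y \<in> X \<Longrightarrow> z \<in> X \<Longrightarrow> d x z \<le> K * (d x y + d y z)"
    and K: "K \<ge> 1"
    and pos: "\<And>x y. x \<in> X \<Longrightarrow> y \<in> X \<Longrightarrow> x \<noteq> y \<Longrightarrow> d x y > 0"
    and A: "A \<subseteq> X" "porous X d lam A" and lam: "lam > 0"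
    and x: "x \<in> X" and r: "r > 0"
  obtains y s where "y \<in> X" "0 < s" "s \<le> r / 2"
    "\<And>u. u \<in> X \<Longrightarrow> d y u < 2 * s \<Longrightarrow> u \<notin> A"
    "\<And>u. u \<in> X \<Longrightarrow> d y u < s \<Longrightarrow> d x u < r"
proof (cases "\<exists>z\<in>A. d x z < r / (2 * K)")
  case True
  then obtain z where z: "z \<in> A" "d x z < r / (2 * K)" by blast
  have zX: "z \<in> X" using z A by blast
  define \<delta> where "\<delta> = r / (4 * K\<^sup>2)"
  have "K\<^sup>2 \<ge> 1" using K by simp
  then have "\<delta> \<le> r / 4" unfolding \<delta>_def using r by (intro divide_left_mono) auto
  then have \<delta>: "\<delta> > 0" "\<delta> \<le> r / 2" using r K by (auto simp: \<delta>_def)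
  obtain y where y: "y \<in> X" "y \<noteq> z" "d z y < \<delta>"
    and hole: "\<And>u. u \<in> X \<Longrightarrow> d y u < lam * d z y \<Longrightarrow> u \<notin> A"
    using A(2) z(1) \<delta>(1) unfolding porous_def porous_at_def by blast
  define s where "s = min (lam * d z y / 2) \<delta>"
  have s: "0 < s" "s \<le> \<delta>" "2 * s \<le> lam * d z y"
    using pos[OF zX y(1)] y(2) lam \<delta> by (auto simp: s_def)
  show ?thesis
  proof (rule that[OF y(1) s(1)])
    show "s \<le> r / 2" using s \<delta> by linarith
    show "u \<notin> A" if "u \<in> X" "d y u < 2 * s" for u using hole that s by fastforce
  next
    fix u assume u: "u \<in> X" "d y u < s"
    have "d x u \<le> K * (d x z + d z u)" using quasi[OF x zX u(1)] .
    also have "\<dots> \<le> K * (d x z + K * (d z y + d y u))"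
      using quasi[OF zX y(1) u(1)] K by (intro mult_left_mono add_left_mono) auto
    also have "\<dots> = K * d x z + K * K * (d z y + d y u)" by (simp add: algebra_simps)
    also have "\<dots> < K * (r / (2 * K)) + K * K * (2 * \<delta>)"
      using z(2) y(3) u(2) s(2) K by (intro add_less_le_mono mult_strict_left_mono mult_left_mono) auto
    also have "\<dots> = r" using K by (simp add: \<delta>_def field_simps power2_eq_square)
    finally show "d x u < r" .
  qed
next
  case False
  show ?thesis
  proof (rule that[OF x])
    show "0 < r / (4 * K)" "r / (4 * K) \<le> r / 2" using r K by (auto simp: field_simps)
    show "u \<notin> A" if "u \<in> X" "d x u < 2 * (r / (4 * K))" for u
      using False that by auto
    show "d x u < r" if "u \<in> X" "d x u < r / (4 * K)" for u
      using that \<open>r / (4 * K) \<le> r / 2\<close> r by linarith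
  qed
qed

lemma porous_nested_balls:
  fixes d :: "'x \<Rightarrow> 'x \<Rightarrow> real" and A :: "nat \<Rightarrow> 'x set"
  assumes quasi: "\<And>x y z. x \<in> X \<Longrightarrow> y \<in> X \<Longrightarrow> z \<in> X \<Longrightarrow> d x z \<le> K * (d x y + d y z)"
    and K: "K \<ge> 1"
    and pos: "\<And>x y. x \<in> X \<Longrightarrow> y \<in> X \<Longrightarrow> x \<noteq> y \<Longrightarrow> d x y > 0"
    and AX: "\<And>n. A n \<subseteq> X" and A: "\<And>n. porous X d lam (A n)" and lam: "lam > 0"
    and centre: "x\<^sub>0 \<in> X" and radius: "r\<^sub>0 > 0"
  obtains xs rs where "xs 0 = x\<^sub>0" "rs 0 = r\<^sub>0"
    "\<And>n. xs n \<in> X \<and> rs n > 0 \<and> rs n \<le> r\<^sub>0 / 2 ^ n"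
    "\<And>n u. u \<in> X \<Longrightarrow> d (xs (Suc n)) u < 2 * rs (Suc n) \<Longrightarrow> u \<notin> A n"
    "\<And>n u. u \<in> X \<Longrightarrow> d (xs (Suc n)) u < rs (Suc n) \<Longrightarrow> d (xs n) u < rs n"
proof -
  define P where "P n x r ys \<longleftrightarrow> fst ys \<in> X \<and> 0 < snd ys \<and> snd ys \<le> r / 2 \<and>
      (\<forall>u\<in>X. d (fst ys) u < 2 * snd ys \<longrightarrow> u \<notin> A n) \<and>
      (\<forall>u\<in>X. d (fst ys) u < snd ys \<longrightarrow> d x u < r)" for n x r ys
  have step: "\<exists>ys. P n x r ys" if x: "x \<in> X" and r: "r > 0" for n x r
  proof (rule porous_hole_in_ball[OF quasi K pos AX A lam x r])
    fix y s assume "y \<in> X" "0 < s" "s \<le> r / 2"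
      "\<And>u. u \<in> X \<Longrightarrow> d y u < 2 * s \<Longrightarrow> u \<notin> A n"
      "\<And>u. u \<in> X \<Longrightarrow> d y u < s \<Longrightarrow> d x u < r"
    then show ?thesis unfolding P_def by (intro exI[of _ "(y, s)"]) auto
  qed
  define xr where "xr = rec_nat (x\<^sub>0, r\<^sub>0) (\<lambda>n (x, r). SOME ys. P n x r ys)"
  define xs where "xs n = fst (xr n)" for n
  define rs where "rs n = snd (xr n)" for n
  have xr_0: "xs 0 = x\<^sub>0" "rs 0 = r\<^sub>0" by (simp_all add: xs_def rs_def xr_def)
  have xr_Suc: "P n (xs n) (rs n) (xs (Suc n), rs (Suc n))" if "xs n \<in> X" "rs n > 0" for n
  proof -
    have "xr (Suc n) = (SOME ys. P n (xs n) (rs n) ys)" by (simp add: xr_def xs_def rs_def split_beta)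
    moreover have "xr (Suc n) = (xs (Suc n), rs (Suc n))" by (simp add: xs_def rs_def)
    ultimately show ?thesis using someI_ex[OF step[where n = n, OF that]] by simp
  qed
  have inv: "xs n \<in> X \<and> rs n > 0 \<and> rs n \<le> r\<^sub>0 / 2 ^ n" for n
  proof (induction n)
    case (Suc n)
    then show ?case using xr_Suc[of n] by (auto simp: P_def)
  qed (use centre radius xr_0 in auto)
  show thesis
  proof (rule that[OF xr_0 inv])
    show "u \<notin> A n" if "u \<in> X" "d (xs (Suc n)) u < 2 * rs (Suc n)" for n u
      using that xr_Suc[of n] inv[of n] by (auto simp: P_def)
    show "d (xs n) u < rs n" if "u \<in> X" "d (xs (Suc n)) u < rs (Suc n)" for n u
      using that xr_Suc[of n] inv[of n] by (auto simp: P_def)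
  qed
qed

text \<open>Completeness is required only for sequences with an explicit Cauchy modulus \<open>r\<close>: this is
  the form in which the nested balls produce them, and it does not need continuity of \<open>d\<close>.\<close>

lemma not_sigma_porous_if_ball_subset:
  fixes d :: "'x \<Rightarrow> 'x \<Rightarrow> real"
  assumes quasi: "\<And>x y z. x \<in> X \<Longrightarrow> y \<in> X \<Longrightarrow> z \<in> X \<Longrightarrow> d x z \<le> K * (d x y + d y z)"
    and K: "K \<ge> 1"
    and pos: "\<And>x y. x \<in> X \<Longrightarrow> y \<in> X \<Longrightarrow> x \<noteq> y \<Longrightarrow> d x y > 0"
    and self: "\<And>x. d x x = 0"
    and complete: "\<And>x r. (\<forall>n. x n \<in> X) \<Longrightarrow> (\<forall>n. r n > 0) \<Longrightarrow> r \<longlonglongrightarrow> 0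
        \<Longrightarrow> (\<forall>n k. n \<le> k \<longrightarrow> d (x n) (x k) < r n) \<Longrightarrow> \<exists>l\<in>X. \<forall>n. d (x n) l \<le> r n"
    and centre: "x\<^sub>0 \<in> X" and radius: "r\<^sub>0 > 0"
    and ball: "\<And>u. u \<in> X \<Longrightarrow> d x\<^sub>0 u < 2 * r\<^sub>0 \<Longrightarrow> u \<in> E"
  shows "\<not> sigma_porous X d E"
proof
  assume "sigma_porous X d E"
  then obtain lam where lam: "0 < lam" and "sigma_porous_lam X d lam E"
    unfolding sigma_porous_def by auto
  then obtain A :: "nat \<Rightarrow> 'x set" where A_props: "\<forall>n. A n \<subseteq> X \<and> porous X d lam (A n)"
    and E: "E = (\<Union>n. A n)"
    unfolding sigma_porous_lam_def by blast
  then have AX: "\<And>n. A n \<subseteq> X" and A: "\<And>n. porous X d lam (A n)" by auto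
  obtain xs rs where xr_0: "xs 0 = x\<^sub>0" "rs 0 = r\<^sub>0"
    and inv: "\<And>n. xs n \<in> X \<and> rs n > 0 \<and> rs n \<le> r\<^sub>0 / 2 ^ n"
    and hole: "\<And>n u. u \<in> X \<Longrightarrow> d (xs (Suc n)) u < 2 * rs (Suc n) \<Longrightarrow> u \<notin> A n"
    and nested: "\<And>n u. u \<in> X \<Longrightarrow> d (xs (Suc n)) u < rs (Suc n) \<Longrightarrow> d (xs n) u < rs n"
    using porous_nested_balls[where A = A, OF quasi K pos AX A lam centre radius] by blast
  have nested': "d (xs n) u < rs n" if "u \<in> X" "d (xs (n + k)) u < rs (n + k)" for n k u
    using that by (induction k) (auto dest: nested)
  have cauchy: "\<forall>n k. n \<le> k \<longrightarrow> d (xs n) (xs k) < rs n"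
  proof (intro allI impI)
    fix n k :: nat assume "n \<le> k"
    then obtain j where "k = n + j" using le_Suc_ex by blast
    then show "d (xs n) (xs k) < rs n" using nested'[of "xs k" n j] inv[of k] self[of "xs k"] by auto
  qed
  have "rs \<longlonglongrightarrow> 0"
  proof (rule real_tendsto_sandwich[of "\<lambda>n. 0" _ _ "\<lambda>n. r\<^sub>0 / 2 ^ n"])
    show "(\<lambda>n. r\<^sub>0 / 2 ^ n) \<longlonglongrightarrow> 0" by (intro LIMSEQ_divide_realpow_zero) auto
    show "\<forall>\<^sub>F n in sequentially. 0 \<le> rs n" using inv by (simp add: less_imp_le)
    show "\<forall>\<^sub>F n in sequentially. rs n \<le> r\<^sub>0 / 2 ^ n" using inv by simp
  qed simp
  moreover have "\<forall>n. xs n \<in> X" "\<forall>n. rs n > 0" using inv by auto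
  ultimately obtain l where l: "l \<in> X" "\<And>n. d (xs n) l \<le> rs n"
    using complete[OF _ _ _ cauchy] by blast
  have "l \<in> E" using ball[OF l(1)] l(2)[of 0] radius by (simp add: xr_0)
  then obtain n where "l \<in> A n" unfolding E by blast
  moreover have "d (xs (Suc n)) l < 2 * rs (Suc n)" using l(2)[of "Suc n"] inv[of "Suc n"] by simp
  ultimately show False using hole l(1) by blast
qed

lemma norm_diff_powr_le:
  fixes u v :: "'a::real_normed_vector"
  assumes "p \<ge> 0"
  shows "norm (u - v) powr p \<le> 2 powr p * (norm u powr p + norm v powr p)"
proof -
  have "norm (u - v) powr p \<le> (2 * max (norm u) (norm v)) powr p"
    using norm_triangle_ineq4[of u v] assms by (intro powr_mono2) auto
  also have "\<dots> = 2 powr p * max (norm u) (norm v) powr p" by (simp add: powr_mult)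
  also have "max (norm u) (norm v) powr p \<le> norm u powr p + norm v powr p"
    by (simp add: max_def)
  finally show ?thesis by (simp add: mult_left_mono)
qed

lemma root_powr_quasi_triangle:
  fixes R\<^sub>1 R\<^sub>2 R\<^sub>3 p :: real
  assumes "R\<^sub>1 \<ge> 0" "R\<^sub>2 \<ge> 0" "R\<^sub>3 \<ge> 0" "p \<ge> 1" "R\<^sub>3 \<le> 2 powr p * (R\<^sub>1 + R\<^sub>2)"
  shows "R\<^sub>3 powr (1 / p) \<le> 4 * (R\<^sub>1 powr (1 / p) + R\<^sub>2 powr (1 / p))"
proof -
  define q where "q = 1 / p"
  have q: "q > 0" "q \<le> 1" using assms by (auto simp: q_def)
  have "R\<^sub>3 powr q \<le> (2 powr p * (R\<^sub>1 + R\<^sub>2)) powr q"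
    using assms q by (intro powr_mono2) auto
  also have "\<dots> = 2 * (R\<^sub>1 + R\<^sub>2) powr q"
    using assms by (simp add: powr_mult powr_powr q_def)
  also have "(R\<^sub>1 + R\<^sub>2) powr q \<le> (2 * max R\<^sub>1 R\<^sub>2) powr q"
    using assms q by (intro powr_mono2) auto
  also have "\<dots> = 2 powr q * max R\<^sub>1 R\<^sub>2 powr q" by (simp add: powr_mult)
  also have "\<dots> \<le> 2 * (R\<^sub>1 powr q + R\<^sub>2 powr q)"
    using q powr_mono[of q 1 2] by (intro mult_mono) (auto simp: max_def)
  finally show ?thesis unfolding q_def by simp
qed

lemma powr_le_powr_iff:
  fixes x y a :: real
  assumes "0 \<le> x" "0 \<le> y" "0 < a"
  shows "x powr a \<le> y powr a \<longleftrightarrow> x \<le> y"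
  using assms by (meson less_imp_le not_le powr_less_mono2 powr_mono2)

lemma Lp_dist_self: "p > 0 \<Longrightarrow> Lp_dist M p f f = 0"
  unfolding Lp_dist_def by simp

lemma Lp_dist_nonneg: "Lp_dist M p f g \<ge> 0"
  unfolding Lp_dist_def by simp

lemma nn_integral_eq_Lp_dist_powr:
  assumes "p > 0" "(\<integral>\<^sup>+ x. ennreal (cmod (f x - g x) powr p) \<partial>M) < \<infinity>"
  shows "(\<integral>\<^sup>+ x. ennreal (cmod (f x - g x) powr p) \<partial>M) = ennreal (Lp_dist M p f g powr p)"
  using assms by (simp add: Lp_dist_def powr_powr less_top[symmetric] ennreal_enn2real_if)

lemma wtrans_iterate_gpow:
  "(wtrans a w ^^ n) f (gpow n a) = complex_of_real (\<Prod>k\<in>{1..n}. w (gpow k a)) * f 0"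
proof (induction n)
  case (Suc n)
  have "(wtrans a w ^^ Suc n) f (gpow (Suc n) a) =
      complex_of_real (w (gpow (Suc n) a)) * (wtrans a w ^^ n) f (gpow n a)"
    by (simp add: wtrans_def add.assoc[symmetric])
  then show ?case
    using Suc by (simp add: prod.nat_ivl_Suc' mult.assoc)
qed simp

context
  fixes M :: "'g::group_add measure"
  assumes haar: "discrete_left_Haar M"
begin

lemma sets_eq_UNIV: "sets M = UNIV"
  using haar unfolding discrete_left_Haar_def by blast

lemma space_eq_UNIV: "space M = UNIV"
  using sets.sets_into_space[of UNIV M] sets_eq_UNIV by auto

lemma measurable_discrete: "space N = UNIV \<Longrightarrow> f \<in> measurable M N"
  using measurable_cong_sets[of M "count_space UNIV" N N] sets_eq_UNIV by simp

lemma borel_measurable_discrete: "f \<in> borel_measurable M"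
  by (simp add: measurable_discrete)

lemma emeasure_singleton: "emeasure M {t} = emeasure M {0}"
  using haar unfolding discrete_left_Haar_def by (metis add.right_neutral image_empty image_insert)

lemma nn_integral_left_translate: "(\<integral>\<^sup>+ x. g (-a + x) \<partial>M) = (\<integral>\<^sup>+ x. g x \<partial>M)"
proof -
  have shift: "(\<lambda>x. -a + x) \<in> measurable M M"
    by (rule measurable_discrete[OF space_eq_UNIV])
  have preimage: "(\<lambda>x. -a + x) -` A \<inter> space M = (\<lambda>x. a + x) ` A" for A
    by (auto simp: space_eq_UNIV image_iff add.assoc[symmetric] intro!: bexI[of _ "-a + _"])
  have "distr M M (\<lambda>x. -a + x) = M"
    using haar sets_eq_UNIV
    by (intro measure_eqI) (auto simp: emeasure_distr[OF shift] preimage discrete_left_Haar_def)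
  then show ?thesis
    using nn_integral_distr[OF shift, of g] by (simp add: measurable_discrete)
qed

lemma Lp_iff: "f \<in> Lp M p \<longleftrightarrow> (\<integral>\<^sup>+ x. ennreal (cmod (f x) powr p) \<partial>M) < \<infinity>"
  unfolding Lp_def using borel_measurable_discrete by blast

lemma nn_integral_norm_diff_powr_limit_le:
  fixes x :: "nat \<Rightarrow> 'g \<Rightarrow> 'a::real_normed_vector"
  assumes lim: "\<And>t. (\<lambda>k. x k t) \<longlonglongrightarrow> l t" and p: "p > 0"
    and bound: "eventually (\<lambda>k. (\<integral>\<^sup>+ t. ennreal (norm (y t - x k t) powr p) \<partial>M) \<le> B) sequentially"
  shows "(\<integral>\<^sup>+ t. ennreal (norm (y t - l t) powr p) \<partial>M) \<le> B"
proof -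
  have pointwise: "(\<lambda>k. ennreal (norm (y t - x k t) powr p)) \<longlonglongrightarrow> ennreal (norm (y t - l t) powr p)" for t
    using p by (intro tendsto_ennrealI tendsto_powr' tendsto_intros lim) auto
  have "(\<integral>\<^sup>+ t. ennreal (norm (y t - l t) powr p) \<partial>M) =
      (\<integral>\<^sup>+ t. liminf (\<lambda>k. ennreal (norm (y t - x k t) powr p)) \<partial>M)"
    by (intro nn_integral_cong lim_imp_Liminf[symmetric] pointwise) simp
  also have "\<dots> \<le> liminf (\<lambda>k. \<integral>\<^sup>+ t. ennreal (norm (y t - x k t) powr p) \<partial>M)"
    by (intro nn_integral_liminf) (simp add: borel_measurable_discrete)
  also have "\<dots> \<le> B"
    using bound by (intro Liminf_le) auto
  finally show ?thesis .
qed

context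
  fixes p :: real
  assumes p: "p \<ge> 1"
begin

lemma nn_integral_norm_diff_powr_le:
  "(\<integral>\<^sup>+ x. ennreal (cmod (u x - v x) powr p) \<partial>M) \<le>
    ennreal (2 powr p) * ((\<integral>\<^sup>+ x. ennreal (cmod (u x) powr p) \<partial>M) + (\<integral>\<^sup>+ x. ennreal (cmod (v x) powr p) \<partial>M))"
proof -
  have "(\<integral>\<^sup>+ x. ennreal (cmod (u x - v x) powr p) \<partial>M) \<le>
     (\<integral>\<^sup>+ x. ennreal (2 powr p) * (ennreal (cmod (u x) powr p) + ennreal (cmod (v x) powr p)) \<partial>M)"
    using norm_diff_powr_le[of p] p
    by (intro nn_integral_mono) (simp add: ennreal_mult[symmetric] ennreal_plus[symmetric] del: ennreal_plus)
  also have "\<dots> = ennreal (2 powr p) * ((\<integral>\<^sup>+ x. ennreal (cmod (u x) powr p) \<partial>M) + (\<integral>\<^sup>+ x. ennreal (cmod (v x) powr p) \<partial>M))"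
    by (simp add: nn_integral_cmult nn_integral_add borel_measurable_discrete)
  finally show ?thesis .
qed

lemma Lp_diff_finite:
  assumes "f \<in> Lp M p" "g \<in> Lp M p"
  shows "(\<integral>\<^sup>+ x. ennreal (cmod (f x - g x) powr p) \<partial>M) < \<infinity>"
  using nn_integral_norm_diff_powr_le[of f g] assms unfolding Lp_iff
  by (simp add: ennreal_mult_less_top order_le_less_trans)

lemma Lp_dist_quasi_triangle:
  assumes "f \<in> Lp M p" "g \<in> Lp M p" "h \<in> Lp M p"
  shows "Lp_dist M p f h \<le> 4 * (Lp_dist M p f g + Lp_dist M p g h)"
proof -
  define N where "N u v = (\<integral>\<^sup>+ x. ennreal (cmod (u x - v x) powr p) \<partial>M)" for u v
  have fin: "N f g < \<infinity>" "N g h < \<infinity>" "N f h < \<infinity>"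
    unfolding N_def using Lp_diff_finite assms by auto
  have "N f h \<le> ennreal (2 powr p) * (N f g + N h g)"
    using nn_integral_norm_diff_powr_le[of "\<lambda>x. f x - g x" "\<lambda>x. h x - g x"] unfolding N_def by simp
  also have "N h g = N g h" unfolding N_def by (simp add: norm_minus_commute)
  also have "ennreal (2 powr p) * (N f g + N g h) = ennreal (2 powr p * (enn2real (N f g) + enn2real (N g h)))"
    using fin by (simp add: ennreal_mult less_top)
  finally have "enn2real (N f h) \<le> enn2real (ennreal (2 powr p * (enn2real (N f g) + enn2real (N g h))))"
    by (intro enn2real_mono) auto
  then have "enn2real (N f h) \<le> 2 powr p * (enn2real (N f g) + enn2real (N g h))"
    by simp
  then show ?thesis
    unfolding Lp_dist_def N_def[symmetric] using p by (intro root_powr_quasi_triangle) auto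
qed

lemma point_mass_Lp: "(\<lambda>x. if x = t then z else 0) \<in> Lp M p"
proof -
  have "(\<integral>\<^sup>+ x. ennreal (cmod (if x = t then z else 0) powr p) \<partial>M) =
      (\<integral>\<^sup>+ x. ennreal (cmod z powr p) * indicator {t} x \<partial>M)"
    using p by (intro nn_integral_cong) (auto split: split_indicator)
  also have "\<dots> = ennreal (cmod z powr p) * emeasure M {0}"
    using emeasure_singleton[of t] by (simp add: nn_integral_cmult_indicator sets_eq_UNIV)
  also have "\<dots> < \<infinity>"
    using haar unfolding discrete_left_Haar_def by (simp add: ennreal_mult_less_top)
  finally show ?thesis unfolding Lp_iff .
qed

lemma wtrans_Lp:
  assumes W: "\<And>x. \<bar>w x\<bar> \<le> W" and f: "f \<in> Lp M p"
  shows "wtrans a w f \<in> Lp M p"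
proof -
  have "cmod (wtrans a w f x) powr p \<le> W powr p * cmod (f (-a + x)) powr p" for x
  proof -
    have "cmod (wtrans a w f x) \<le> W * cmod (f (-a + x))"
      unfolding wtrans_def norm_mult using W by (simp add: mult_right_mono)
    then have "cmod (wtrans a w f x) powr p \<le> (W * cmod (f (-a + x))) powr p"
      using p by (intro powr_mono2) auto
    also have "\<dots> = W powr p * cmod (f (-a + x)) powr p"
      using W[of x] by (simp add: powr_mult)
    finally show ?thesis .
  qed
  then have "(\<integral>\<^sup>+ x. ennreal (cmod (wtrans a w f x) powr p) \<partial>M) \<le>
      (\<integral>\<^sup>+ x. ennreal (W powr p) * ennreal (cmod (f (-a + x)) powr p) \<partial>M)"
    by (intro nn_integral_mono) (simp add: ennreal_mult[symmetric])
  also have "\<dots> = ennreal (W powr p) * (\<integral>\<^sup>+ x. ennreal (cmod (f x) powr p) \<partial>M)"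
    by (simp add: nn_integral_cmult borel_measurable_discrete
        nn_integral_left_translate[of "\<lambda>y. ennreal (cmod (f y) powr p)"])
  also have "\<dots> < \<infinity>"
    using f unfolding Lp_iff by (simp add: ennreal_mult_less_top)
  finally show ?thesis unfolding Lp_iff .
qed

lemma wtrans_iterate_Lp:
  "(\<And>x. \<bar>w x\<bar> \<le> W) \<Longrightarrow> f \<in> Lp M p \<Longrightarrow> (wtrans a w ^^ n) f \<in> Lp M p"
  by (induction n) (auto intro: wtrans_Lp)

context
  assumes unit_mass: "emeasure M {0} \<ge> 1"
begin

lemma point_le_nn_integral: "g t \<le> (\<integral>\<^sup>+ x. g x \<partial>M)"
proof -
  have "g t \<le> g t * emeasure M {t}"
    using unit_mass emeasure_singleton[of t] mult_left_mono[of 1 _ "g t"] by simp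
  also have "\<dots> = (\<integral>\<^sup>+ x. g t * indicator {t} x \<partial>M)"
    using sets_eq_UNIV by (simp add: nn_integral_cmult_indicator)
  also have "\<dots> \<le> (\<integral>\<^sup>+ x. g x \<partial>M)"
    by (intro nn_integral_mono) (auto split: split_indicator)
  finally show ?thesis .
qed

lemma norm_le_Lp_dist:
  assumes "f \<in> Lp M p" "g \<in> Lp M p"
  shows "cmod (f t - g t) \<le> Lp_dist M p f g"
proof -
  have "ennreal (cmod (f t - g t) powr p) \<le> (\<integral>\<^sup>+ x. ennreal (cmod (f x - g x) powr p) \<partial>M)"
    by (rule point_le_nn_integral)
  also have "\<dots> = ennreal (Lp_dist M p f g powr p)"
    using p Lp_diff_finite[OF assms] by (intro nn_integral_eq_Lp_dist_powr) auto
  finally show ?thesis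
    using p by (simp add: Lp_dist_def powr_le_powr_iff)
qed

lemma Lp_dist_pos:
  assumes "f \<in> Lp M p" "g \<in> Lp M p" "f \<noteq> g"
  shows "Lp_dist M p f g > 0"
proof -
  obtain t where "f t \<noteq> g t" using assms(3) by blast
  then have "0 < cmod (f t - g t)" by simp
  also have "\<dots> \<le> Lp_dist M p f g" using norm_le_Lp_dist[OF assms(1,2)] .
  finally show ?thesis .
qed

lemma Lp_Cauchy_pointwise_convergent:
  assumes x: "\<forall>n. x n \<in> Lp M p" and r_lim: "r \<longlonglongrightarrow> 0"
    and cauchy: "\<forall>n k. n \<le> k \<longrightarrow> Lp_dist M p (x n) (x k) < r n"
  shows "convergent (\<lambda>k. x k t)"
proof -
  have dist_pointwise: "dist (x n t) (x k t) < r n" if "n \<le> k" for n k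
  proof -
    have "cmod (x n t - x k t) \<le> Lp_dist M p (x n) (x k)"
      using x by (intro norm_le_Lp_dist) auto
    also have "\<dots> < r n" using cauchy that by blast
    finally show ?thesis by (simp add: dist_norm)
  qed
  have "Cauchy (\<lambda>k. x k t)"
  proof (rule metric_CauchyI)
    fix \<epsilon> :: real assume "\<epsilon> > 0"
    then have "eventually (\<lambda>n. r n < \<epsilon> / 2) sequentially"
      using r_lim by (intro order_tendstoD(2)) auto
    then obtain N where N: "r N < \<epsilon> / 2" by (auto simp: eventually_sequentially)
    have "dist (x m t) (x k t) < \<epsilon>" if "N \<le> m" "N \<le> k" for m k
      using dist_triangle3[of "x m t" "x k t" "x N t"] dist_pointwise[of N m]
        dist_pointwise[of N k] that N by linarith
    then show "\<exists>N. \<forall>m\<ge>N. \<forall>k\<ge>N. dist (x m t) (x k t) < \<epsilon>" by blast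
  qed
  then show ?thesis by (simp add: Cauchy_convergent_iff)
qed

lemma Lp_complete:
  assumes x: "\<forall>n. x n \<in> Lp M p" and r: "\<forall>n. r n > 0" and r_lim: "r \<longlonglongrightarrow> 0"
    and cauchy: "\<forall>n k. n \<le> k \<longrightarrow> Lp_dist M p (x n) (x k) < r n"
  shows "\<exists>l\<in>Lp M p. \<forall>n. Lp_dist M p (x n) l \<le> r n"
proof -
  have l: "(\<lambda>k. x k t) \<longlonglongrightarrow> lim (\<lambda>k. x k t)" for t
    using Lp_Cauchy_pointwise_convergent[OF x r_lim cauchy] by (simp add: convergent_LIMSEQ_iff)
  define l where "l t = lim (\<lambda>k. x k t)" for t
  have bound: "(\<integral>\<^sup>+ t. ennreal (cmod (x n t - l t) powr p) \<partial>M) \<le> ennreal (r n powr p)" for n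
    unfolding l_def
  proof (rule nn_integral_norm_diff_powr_limit_le[OF l])
    have "(\<integral>\<^sup>+ t. ennreal (cmod (x n t - x k t) powr p) \<partial>M) \<le> ennreal (r n powr p)" if "n \<le> k" for k
    proof -
      have "(\<integral>\<^sup>+ t. ennreal (cmod (x n t - x k t) powr p) \<partial>M) = ennreal (Lp_dist M p (x n) (x k) powr p)"
        using p x by (intro nn_integral_eq_Lp_dist_powr Lp_diff_finite) auto
      also have "\<dots> \<le> ennreal (r n powr p)"
        using cauchy that p by (intro ennreal_leI powr_mono2) (auto simp: Lp_dist_def less_imp_le)
      finally show ?thesis .
    qed
    then show "eventually (\<lambda>k. (\<integral>\<^sup>+ t. ennreal (cmod (x n t - x k t) powr p) \<partial>M) \<le> ennreal (r n powr p)) sequentially"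
      unfolding eventually_sequentially by blast
  qed (use p in auto)
  have "(\<integral>\<^sup>+ t. ennreal (cmod (l t) powr p) \<partial>M) =
      (\<integral>\<^sup>+ t. ennreal (cmod (x 0 t - (x 0 t - l t)) powr p) \<partial>M)" by simp
  also have "\<dots> \<le> ennreal (2 powr p) * ((\<integral>\<^sup>+ t. ennreal (cmod (x 0 t) powr p) \<partial>M)
      + (\<integral>\<^sup>+ t. ennreal (cmod (x 0 t - l t) powr p) \<partial>M))"
    by (rule nn_integral_norm_diff_powr_le)
  also have "\<dots> < \<infinity>"
    using x bound[of 0] unfolding Lp_iff
    by (simp add: ennreal_mult_less_top order_le_less_trans)
  finally have l_Lp: "l \<in> Lp M p" unfolding Lp_iff .
  have "Lp_dist M p (x n) l \<le> r n" for n
  proof -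
    have "ennreal (Lp_dist M p (x n) l powr p) = (\<integral>\<^sup>+ t. ennreal (cmod (x n t - l t) powr p) \<partial>M)"
      using p x l_Lp by (intro nn_integral_eq_Lp_dist_powr[symmetric] Lp_diff_finite) auto
    also have "\<dots> \<le> ennreal (r n powr p)" by (rule bound)
    finally have "Lp_dist M p (x n) l powr p \<le> r n powr p"
      using r by (simp add: ennreal_le_iff)
    moreover have "0 \<le> r n" using r by (simp add: less_imp_le)
    moreover have "p > 0" using p by simp
    ultimately show ?thesis using powr_le_powr_iff[OF Lp_dist_nonneg] by blast
  qed
  with l_Lp show ?thesis by blast
qed

lemma not_sigma_porous_norm_value_ge:
  assumes c: "c > 0"
  shows "\<not> sigma_porous (Lp M p) (Lp_dist M p) {f \<in> Lp M p. cmod (f t) * c \<ge> 1}"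
proof -
  define f\<^sub>0 :: "'g \<Rightarrow> complex" where "f\<^sub>0 x = (if x = t then complex_of_real (2 / c) else 0)" for x
  have f\<^sub>0: "f\<^sub>0 \<in> Lp M p" unfolding f\<^sub>0_def by (rule point_mass_Lp)
  have ball: "u \<in> {f \<in> Lp M p. cmod (f t) * c \<ge> 1}"
    if u: "u \<in> Lp M p" "Lp_dist M p f\<^sub>0 u < 2 * (1 / (2 * c))" for u
  proof -
    have "2 / c - cmod (u t) \<le> cmod (f\<^sub>0 t - u t)"
      using norm_triangle_ineq2[of "f\<^sub>0 t" "u t"] c by (simp add: f\<^sub>0_def norm_divide)
    also have "\<dots> \<le> Lp_dist M p f\<^sub>0 u"
      using norm_le_Lp_dist[OF f\<^sub>0 u(1)] .
    also have "\<dots> < 1 / c" using u(2) by simp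
    finally have "1 / c \<le> cmod (u t)" by simp
    then show ?thesis using u(1) c by (simp add: field_simps)
  qed
  show ?thesis
  proof (rule not_sigma_porous_if_ball_subset[where K = 4 and x\<^sub>0 = f\<^sub>0 and r\<^sub>0 = "1 / (2 * c)"])
    show "Lp_dist M p f h \<le> 4 * (Lp_dist M p f g + Lp_dist M p g h)"
      if "f \<in> Lp M p" "g \<in> Lp M p" "h \<in> Lp M p" for f g h
      using that by (rule Lp_dist_quasi_triangle)
    show "Lp_dist M p f g > 0" if "f \<in> Lp M p" "g \<in> Lp M p" "f \<noteq> g" for f g
      using that by (rule Lp_dist_pos)
    show "Lp_dist M p f f = 0" for f
      using p by (simp add: Lp_dist_self)
    show "\<exists>l\<in>Lp M p. \<forall>n. Lp_dist M p (x n) l \<le> r n"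
      if "\<forall>n. x n \<in> Lp M p" "\<forall>n. r n > 0" "r \<longlonglongrightarrow> 0"
        "\<forall>n k. n \<le> k \<longrightarrow> Lp_dist M p (x n) (x k) < r n" for x r
      using that by (rule Lp_complete)
    show "u \<in> {f \<in> Lp M p. cmod (f t) * c \<ge> 1}"
      if "u \<in> Lp M p" "Lp_dist M p f\<^sub>0 u < 2 * (1 / (2 * c))" for u
      using that by (rule ball)
  qed (use f\<^sub>0 c in simp_all)
qed

lemma norm_value_ge_subset_non_hypercyclic:
  assumes W: "\<And>x. \<bar>w x\<bar> \<le> W" and c: "\<And>n. c \<le> (\<Prod>k\<in>{1..\<gamma> n}. w (gpow k a))"
  shows "{f \<in> Lp M p. cmod (f 0) * c \<ge> 1}
      \<subseteq> non_hypercyclic_vectors (Lp M p) (Lp_dist M p) (\<lambda>n. wtrans a w ^^ \<gamma> n)"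
proof safe
  fix f assume f: "f \<in> Lp M p" "cmod (f 0) * c \<ge> 1"
  have zero: "(\<lambda>_. 0) \<in> Lp M p" unfolding Lp_iff using p by simp
  have far: "1 \<le> Lp_dist M p ((wtrans a w ^^ \<gamma> n) f) (\<lambda>_. 0)" for n
  proof -
    have "1 \<le> c * cmod (f 0)" using f(2) by (simp add: mult.commute)
    also have "\<dots> \<le> \<bar>\<Prod>k\<in>{1..\<gamma> n}. w (gpow k a)\<bar> * cmod (f 0)"
      using c[of n] by (intro mult_right_mono) auto
    also have "\<dots> = cmod ((wtrans a w ^^ \<gamma> n) f (gpow (\<gamma> n) a) - 0)"
      by (simp add: wtrans_iterate_gpow norm_mult del: of_real_prod)
    also have "\<dots> \<le> Lp_dist M p ((wtrans a w ^^ \<gamma> n) f) (\<lambda>_. 0)"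
      using norm_le_Lp_dist[OF wtrans_iterate_Lp[OF W f(1)] zero] .
    finally show ?thesis .
  qed
  have "\<not> hypercyclic_vector (Lp M p) (Lp_dist M p) (\<lambda>n. wtrans a w ^^ \<gamma> n) f"
    unfolding hypercyclic_vector_def using far zero by (meson not_less zero_less_one)
  then show "f \<in> non_hypercyclic_vectors (Lp M p) (Lp_dist M p) (\<lambda>n. wtrans a w ^^ \<gamma> n)"
    using f(1) by (simp add: non_hypercyclic_vectors_def)
qed

end

end

end

theorem mainTheorem8:
  fixes p :: real and M :: "'g::group_add measure" and a :: 'g
    and \<gamma> :: "nat \<Rightarrow> nat" and w :: "'g \<Rightarrow> real" and c :: real
  assumes p: "p \<ge> 1"
    and haar: "discrete_left_Haar M"
    and e1: "emeasure M {0} \<ge> 1"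
    and unb: "\<not> bdd_above (range \<gamma>)"
    and wpos: "\<And>x. w x > 0"
    and wbdd: "bdd_above (range w)"
    and c_def: "c = (INF n. \<Prod>k\<in>{1..\<gamma> n}. w (gpow k a))"
    and cpos: "c > 0"
  shows "\<not> sigma_porous (Lp M p) (Lp_dist M p) {f \<in> Lp M p. cmod (f 0) * c \<ge> 1}
       \<and> \<not> sigma_porous (Lp M p) (Lp_dist M p)
             (non_hypercyclic_vectors (Lp M p) (Lp_dist M p) (\<lambda>n. wtrans a w ^^ \<gamma> n))"
proof -
  obtain W where "\<And>x. w x \<le> W" using wbdd by (auto simp: bdd_above_def)
  then have W: "\<And>x. \<bar>w x\<bar> \<le> W" using wpos by (simp add: less_imp_le)
  have c_le: "c \<le> (\<Prod>k\<in>{1..\<gamma> n}. w (gpow k a))" for n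
    unfolding c_def by (rule cINF_lower) (auto intro!: bdd_belowI[of _ 0] less_imp_le prod_pos wpos)
  have "\<not> sigma_porous (Lp M p) (Lp_dist M p) {f \<in> Lp M p. cmod (f 0) * c \<ge> 1}"
    by (rule not_sigma_porous_norm_value_ge[OF haar p e1 cpos])
  moreover have "{f \<in> Lp M p. cmod (f 0) * c \<ge> 1}
      \<subseteq> non_hypercyclic_vectors (Lp M p) (Lp_dist M p) (\<lambda>n. wtrans a w ^^ \<gamma> n)"
    by (rule norm_value_ge_subset_non_hypercyclic[OF haar p e1 W c_le])
  ultimately show ?thesis using sigma_porous_subset by blast
qed

end
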